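(* Let $a\in K$ and let $b_1,\dots,b_\ell\notin K$ be distinct ($\ell\ge 1$). Suppose that either $(a,b_i)\in T$ for all $i$, or there are $a_1,\dots,a_\ell\in K$ with $(a_i,b_i)\in T$ and $a_i\circ b_i=a$ for all $i$. Then $\pi\ge\ell(n-2q-m+1)+q-m-1$.
   Context: $G$ is a set of size $n$ and $G(\circ)$, $G(\ast)$ are distinct groups on $G$ with the same identity element. $\mathrm{diff}(\circ,\ast)=\{(a,b):a\circ b\ne a\ast b\}$, $\mathrm{dist}(\circ,\ast)=|\mathrm{diff}(\circ,\ast)|$, $\mathrm{dist}_a=|\{b:a\circ b\ne a\ast b\}|$; $H=\{a:\mathrm{dist}_a=0\}$, $h=|H|$; $K=\{a:\mathrm{dist}_a<n/3\}$, $k=|K|$; $m=\min\{\mathrm{dist}_a:\mathrm{dist}_a>0\}$. Standing assumption: $m\ge 3$. Let $q=\lceil n/3\rceil$ and the profit $\pi=\mathrm{dist}(\circ,\ast)-((k-h)m+(n-k)q)$. Let $T=\{(a,b)\in\mathrm{diff}(\circ,\ast):a\in K,\ a\circ b\in K\}$. *)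

theory Defs
  imports Complex_Main "HOL-Algebra.Group"
begin

text \<open>Two group structures G1 (operation circ) and G2 (operation ast) on the same carrier.\<close>

definition diffset :: "('a, 'b) monoid_scheme \<Rightarrow> ('a, 'c) monoid_scheme \<Rightarrow> ('a \<times> 'a) set" where
  "diffset G1 G2 = {(a, b). a \<in> carrier G1 \<and> b \<in> carrier G1 \<and> a \<otimes>\<^bsub>G1\<^esub> b \<noteq> a \<otimes>\<^bsub>G2\<^esub> b}"

definition distance :: "('a, 'b) monoid_scheme \<Rightarrow> ('a, 'c) monoid_scheme \<Rightarrow> nat" where
  "distance G1 G2 = card (diffset G1 G2)"

definition dist_at :: "('a, 'b) monoid_scheme \<Rightarrow> ('a, 'c) monoid_scheme \<Rightarrow> 'a \<Rightarrow> nat" where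
  "dist_at G1 G2 a = card {b \<in> carrier G1. a \<otimes>\<^bsub>G1\<^esub> b \<noteq> a \<otimes>\<^bsub>G2\<^esub> b}"

definition Hset :: "('a, 'b) monoid_scheme \<Rightarrow> ('a, 'c) monoid_scheme \<Rightarrow> 'a set" where
  "Hset G1 G2 = {a \<in> carrier G1. dist_at G1 G2 a = 0}"

definition Kset :: "('a, 'b) monoid_scheme \<Rightarrow> ('a, 'c) monoid_scheme \<Rightarrow> 'a set" where
  "Kset G1 G2 = {a \<in> carrier G1. real (dist_at G1 G2 a) < real (card (carrier G1)) / 3}"

definition mmin :: "('a, 'b) monoid_scheme \<Rightarrow> ('a, 'c) monoid_scheme \<Rightarrow> nat" where
  "mmin G1 G2 = Min {dist_at G1 G2 a | a. a \<in> carrier G1 \<and> dist_at G1 G2 a > 0}"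

definition qval :: "('a, 'b) monoid_scheme \<Rightarrow> nat" where
  "qval G1 = nat \<lceil>real (card (carrier G1)) / 3\<rceil>"

definition profit :: "('a, 'b) monoid_scheme \<Rightarrow> ('a, 'c) monoid_scheme \<Rightarrow> int" where
  "profit G1 G2 = int (distance G1 G2)
     - ((int (card (Kset G1 G2)) - int (card (Hset G1 G2))) * int (mmin G1 G2)
        + (int (card (carrier G1)) - int (card (Kset G1 G2))) * int (qval G1))"

definition Tset :: "('a, 'b) monoid_scheme \<Rightarrow> ('a, 'c) monoid_scheme \<Rightarrow> ('a \<times> 'a) set" where
  "Tset G1 G2 = {(a, b) \<in> diffset G1 G2. a \<in> Kset G1 G2 \<and> a \<otimes>\<^bsub>G1\<^esub> b \<in> Kset G1 G2}"

end

theory Submission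
  imports Defs
begin

text \<open>
  If a \<circ> b \<noteq> a \<ast> b, then for every u at least one of the products
  b u, a (b u), (a b) u is computed differently by \<circ> and \<ast>, since otherwise associativity in
  both groups would force a \<circ> b = a \<ast> b; translating by b, this gives
  n \<le> d(a) + d(b) + d(a \<circ> b). The profit is the sum over all x of the excess of d(x) over
  the charge 0, m or q of x in H, K - H or G - K, and every excess is nonnegative. Either
  hypothesis yields distinct c_i \<in> K - {a} with n \<le> d(a) + d(c_i) + d(b_i), so the excesses
  of a, the c_i and the b_i alone account for the bound, that of a being at most q - m - 1.
\<close>

lemma (in group) card_left_translate:
  assumes "y \<in> carrier G"
  shows "card {u \<in> carrier G. P (y \<otimes> u)} = card {v \<in> carrier G. P v}"
proof -
  have "(\<lambda>u. y \<otimes> u) ` {u \<in> carrier G. P (y \<otimes> u)} = {v \<in> carrier G. P v}"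
  proof (intro equalityI subsetI)
    fix v assume v: "v \<in> {v \<in> carrier G. P v}"
    then have "v = y \<otimes> (inv y \<otimes> v)" and "inv y \<otimes> v \<in> carrier G"
      using assms by (auto simp: m_assoc[symmetric])
    with v show "v \<in> (\<lambda>u. y \<otimes> u) ` {u \<in> carrier G. P (y \<otimes> u)}" by auto
  qed (use assms in auto)
  moreover have "inj_on (\<lambda>u. y \<otimes> u) {u \<in> carrier G. P (y \<otimes> u)}"
    using inj_on_cmult[OF assms] by (rule inj_on_subset) auto
  ultimately show ?thesis by (metis card_image)
qed

locale group_pair = G1: group G1 + G2: group G2
  for G1 :: "('a, 'b) monoid_scheme" and G2 :: "('a, 'c) monoid_scheme" +
  assumes same_carrier: "carrier G2 = carrier G1"
    and finite_carrier: "finite (carrier G1)"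
    and same_one: "\<one>\<^bsub>G2\<^esub> = \<one>\<^bsub>G1\<^esub>"
begin

abbreviation "n \<equiv> card (carrier G1)"
abbreviation "d \<equiv> dist_at G1 G2"
abbreviation "K \<equiv> Kset G1 G2"
abbreviation "H \<equiv> Hset G1 G2"
abbreviation "m \<equiv> mmin G1 G2"
abbreviation "q \<equiv> qval G1"

lemma card_carrier_pos: "n > 0"
  using finite_carrier G1.one_closed by (auto simp: card_gt_0_iff)

lemma dist_at_pos:
  assumes "y \<in> carrier G1" "x \<otimes>\<^bsub>G1\<^esub> y \<noteq> x \<otimes>\<^bsub>G2\<^esub> y"
  shows "d x > 0"
  using assms finite_carrier by (auto simp: dist_at_def card_gt_0_iff)

lemma dist_at_one: "d \<one>\<^bsub>G1\<^esub> = 0"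
proof -
  have "{u \<in> carrier G1. \<one>\<^bsub>G1\<^esub> \<otimes>\<^bsub>G1\<^esub> u \<noteq> \<one>\<^bsub>G1\<^esub> \<otimes>\<^bsub>G2\<^esub> u} = {}"
    using same_carrier same_one by (metis (mono_tags, lifting) G1.l_one G2.l_one empty_Collect_eq)
  then show ?thesis unfolding dist_at_def by (simp only: card.empty)
qed

lemma one_in_Kset: "\<one>\<^bsub>G1\<^esub> \<in> K"
  using dist_at_one card_carrier_pos by (simp add: Kset_def)

lemma Hset_subset_Kset: "H \<subseteq> K"
  using card_carrier_pos by (auto simp: Hset_def Kset_def)

lemma Kset_subset_carrier: "K \<subseteq> carrier G1"
  by (auto simp: Kset_def)

lemma dist_at_less_qval: "x \<in> K \<Longrightarrow> d x < q"
proof -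
  assume "x \<in> K"
  then have "real (d x) < real n / 3" by (simp add: Kset_def)
  moreover have "real n / 3 \<le> real q" unfolding qval_def by linarith
  ultimately show "d x < q" by linarith
qed

lemma qval_le_dist_at: "x \<in> carrier G1 \<Longrightarrow> x \<notin> K \<Longrightarrow> q \<le> d x"
  unfolding Kset_def qval_def by (simp add: nat_le_iff ceiling_le_iff)

lemma mmin_le_dist_at:
  assumes "x \<in> carrier G1" "d x > 0"
  shows "m \<le> d x"
proof -
  have "finite {d x | x. x \<in> carrier G1 \<and> d x > 0}"
    using finite_carrier by simp
  with assms show ?thesis
    unfolding mmin_def by (intro Min_le) auto
qed

lemma mmin_less_qval: "x \<in> K \<Longrightarrow> d x > 0 \<Longrightarrow> m < q"
  using mmin_le_dist_at dist_at_less_qval Kset_subset_carrier by (meson le_less_trans subsetD)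

lemma card_carrier_le_dist_at_triangle:
  assumes x: "x \<in> carrier G1" and y: "y \<in> carrier G1"
    and ne: "x \<otimes>\<^bsub>G1\<^esub> y \<noteq> x \<otimes>\<^bsub>G2\<^esub> y"
  shows "n \<le> d x + d y + d (x \<otimes>\<^bsub>G1\<^esub> y)"
proof -
  define A where "A = {u \<in> carrier G1. y \<otimes>\<^bsub>G1\<^esub> u \<noteq> y \<otimes>\<^bsub>G2\<^esub> u}"
  define B where "B = {u \<in> carrier G1. x \<otimes>\<^bsub>G1\<^esub> (y \<otimes>\<^bsub>G1\<^esub> u) \<noteq> x \<otimes>\<^bsub>G2\<^esub> (y \<otimes>\<^bsub>G1\<^esub> u)}"
  define C where "C = {u \<in> carrier G1. (x \<otimes>\<^bsub>G1\<^esub> y) \<otimes>\<^bsub>G1\<^esub> u \<noteq> (x \<otimes>\<^bsub>G1\<^esub> y) \<otimes>\<^bsub>G2\<^esub> u}"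
  have "carrier G1 \<subseteq> A \<union> B \<union> C"
  proof
    fix u assume u: "u \<in> carrier G1"
    show "u \<in> A \<union> B \<union> C"
    proof (rule ccontr)
      assume "u \<notin> A \<union> B \<union> C"
      with u have "(x \<otimes>\<^bsub>G2\<^esub> y) \<otimes>\<^bsub>G2\<^esub> u = (x \<otimes>\<^bsub>G1\<^esub> y) \<otimes>\<^bsub>G2\<^esub> u"
        using x y same_carrier by (simp add: A_def B_def C_def G1.m_assoc G2.m_assoc)
      then have "x \<otimes>\<^bsub>G2\<^esub> y = x \<otimes>\<^bsub>G1\<^esub> y"
        using x y u same_carrier G2.right_cancel G2.m_closed G1.m_closed by metis
      with ne show False by simp
    qed
  qed
  then have "n \<le> card (A \<union> B \<union> C)"
    using finite_carrier by (intro card_mono) (auto simp: A_def B_def C_def)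
  also have "\<dots> \<le> card A + card B + card C"
    by (meson card_Un_le add_right_mono le_trans)
  also have "card B = d x"
    unfolding B_def dist_at_def using G1.card_left_translate[OF y] .
  finally show ?thesis by (simp add: dist_at_def A_def C_def)
qed

lemma mmin_less_qval_of_Tset: "(x, y) \<in> Tset G1 G2 \<Longrightarrow> m < q"
  by (auto simp: Tset_def diffset_def intro: mmin_less_qval dist_at_pos)

lemma left_translates_in_Kset:
  assumes T: "\<And>i. i \<in> I \<Longrightarrow> (a, b i) \<in> Tset G1 G2"
    and b: "inj_on b I" "b ` I \<subseteq> carrier G1 - K"
  shows "inj_on (\<lambda>i. a \<otimes>\<^bsub>G1\<^esub> b i) I" and "(\<lambda>i. a \<otimes>\<^bsub>G1\<^esub> b i) ` I \<subseteq> K - {a}"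
    and "\<And>i. i \<in> I \<Longrightarrow> n \<le> d a + d (a \<otimes>\<^bsub>G1\<^esub> b i) + d (b i)"
proof -
  have a: "a \<in> carrier G1" if "i \<in> I" for i
    using T[OF that] by (simp add: Tset_def diffset_def)
  show "inj_on (\<lambda>i. a \<otimes>\<^bsub>G1\<^esub> b i) I"
  proof (rule inj_onI)
    fix i j assume ij: "i \<in> I" "j \<in> I" "a \<otimes>\<^bsub>G1\<^esub> b i = a \<otimes>\<^bsub>G1\<^esub> b j"
    moreover have "b i \<in> carrier G1" "b j \<in> carrier G1"
      using ij b(2) by auto
    ultimately have "b i = b j"
      using a G1.Units_l_cancel G1.Units_eq by blast
    with ij show "i = j" by (meson b(1) inj_onD)
  qed
  show "(\<lambda>i. a \<otimes>\<^bsub>G1\<^esub> b i) ` I \<subseteq> K - {a}"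
    using T a b one_in_Kset by (auto simp: Tset_def)
  show "n \<le> d a + d (a \<otimes>\<^bsub>G1\<^esub> b i) + d (b i)" if "i \<in> I" for i
    using card_carrier_le_dist_at_triangle[of a "b i"] T[OF that] by (auto simp: Tset_def diffset_def)
qed

lemma left_factors_in_Kset:
  assumes T: "\<And>i. i \<in> I \<Longrightarrow> (c i, b i) \<in> Tset G1 G2 \<and> c i \<otimes>\<^bsub>G1\<^esub> b i = a"
    and b: "inj_on b I" "b ` I \<subseteq> carrier G1 - K"
  shows "inj_on c I" and "c ` I \<subseteq> K - {a}" and "\<And>i. i \<in> I \<Longrightarrow> n \<le> d a + d (c i) + d (b i)"
proof -
  have c: "c i \<in> carrier G1" if "i \<in> I" for i
    using T[OF that] by (simp add: Tset_def diffset_def)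
  show "inj_on c I"
  proof (rule inj_onI)
    fix i j assume ij: "i \<in> I" "j \<in> I" "c i = c j"
    then have "c i \<otimes>\<^bsub>G1\<^esub> b i = c i \<otimes>\<^bsub>G1\<^esub> b j"
      using T by metis
    moreover have "b i \<in> carrier G1" "b j \<in> carrier G1"
      using ij b(2) by auto
    ultimately have "b i = b j"
      using ij c G1.Units_l_cancel G1.Units_eq by blast
    with ij show "i = j" by (meson b(1) inj_onD)
  qed
  show "c ` I \<subseteq> K - {a}"
  proof
    fix x assume "x \<in> c ` I"
    then obtain i where i: "i \<in> I" and x: "x = c i" by blast
    have "b i \<in> carrier G1" "b i \<noteq> \<one>\<^bsub>G1\<^esub>"
      using i b(2) one_in_Kset by auto
    then have "c i \<otimes>\<^bsub>G1\<^esub> b i \<noteq> c i"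
      using c[OF i] by simp
    with T[OF i] show "x \<in> K - {a}"
      unfolding x by (auto simp: Tset_def)
  qed
  show "n \<le> d a + d (c i) + d (b i)" if "i \<in> I" for i
    using card_carrier_le_dist_at_triangle[of "c i" "b i"] T[OF that] by (auto simp: Tset_def diffset_def)
qed

definition excess :: "'a \<Rightarrow> int" where
  "excess x = int (d x) - (if x \<in> H then 0 else if x \<in> K then int m else int q)"

lemma excess_nonneg: "x \<in> carrier G1 \<Longrightarrow> excess x \<ge> 0"
  using mmin_le_dist_at qval_le_dist_at by (fastforce simp: excess_def Hset_def)

lemma dist_at_le_mmin_plus_excess: "x \<in> K \<Longrightarrow> int (d x) \<le> int m + excess x"
  by (simp add: excess_def Hset_def)

lemma excess_outside_Kset: "x \<notin> K \<Longrightarrow> excess x = int (d x) - int q"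
  using Hset_subset_Kset by (auto simp: excess_def)

lemma distance_eq_sum_dist_at: "distance G1 G2 = (\<Sum>x\<in>carrier G1. d x)"
proof -
  have "diffset G1 G2 = Sigma (carrier G1) (\<lambda>x. {y \<in> carrier G1. x \<otimes>\<^bsub>G1\<^esub> y \<noteq> x \<otimes>\<^bsub>G2\<^esub> y})"
    by (auto simp: diffset_def)
  then show ?thesis
    using finite_carrier by (simp add: distance_def dist_at_def)
qed

lemma profit_eq_sum_excess: "profit G1 G2 = (\<Sum>x\<in>carrier G1. excess x)"
proof -
  define charge where "charge x = (if x \<in> H then 0 else if x \<in> K then int m else int q)" for x
  have fin_K: "finite K" and fin_H: "finite H"
    using finite_carrier Hset_subset_Kset Kset_subset_carrier by (auto intro: finite_subset)
  have "(\<Sum>x\<in>carrier G1. charge x) = (\<Sum>x\<in>carrier G1 - K. charge x) + (\<Sum>x\<in>K - H. charge x)"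
    using finite_carrier fin_K Hset_subset_Kset Kset_subset_carrier
    by (simp add: sum.subset_diff[of K "carrier G1"] sum.subset_diff[of H K] charge_def)
  also have "\<dots> = (\<Sum>x\<in>carrier G1 - K. int q) + (\<Sum>x\<in>K - H. int m)"
    using Hset_subset_Kset by (intro arg_cong2[where f = "(+)"] sum.cong) (auto simp: charge_def)
  also have "\<dots> = int (card (carrier G1 - K)) * int q + int (card (K - H)) * int m"
    by simp
  also have "\<dots> = (int (card K) - int (card H)) * int m + (int n - int (card K)) * int q"
    using card_Diff_subset[OF fin_K Kset_subset_carrier] card_Diff_subset[OF fin_H Hset_subset_Kset]
      card_mono[OF finite_carrier Kset_subset_carrier] card_mono[OF fin_K Hset_subset_Kset]
    by simp
  finally have "(\<Sum>x\<in>carrier G1. charge x)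
      = (int (card K) - int (card H)) * int m + (int n - int (card K)) * int q" .
  moreover have "excess x = int (d x) - charge x" for x
    by (simp add: excess_def charge_def)
  ultimately show ?thesis
    by (simp add: profit_def distance_eq_sum_dist_at sum_subtractf)
qed

lemma profit_lower_bound:
  assumes a: "a \<in> K" and I: "finite I" "I \<noteq> {}"
    and c: "inj_on c I" "c ` I \<subseteq> K - {a}"
    and b: "inj_on b I" "b ` I \<subseteq> carrier G1 - K"
    and triangle: "\<And>i. i \<in> I \<Longrightarrow> n \<le> d a + d (c i) + d (b i)"
    and mq: "m < q"
  shows "profit G1 G2 \<ge> int (card I) * (int n - 2 * int q - int m + 1) + int q - int m - 1"
proof -
  define l where "l = int (card I)"
  have excess_a: "excess a \<le> int q - int m - 1"
    using a mq dist_at_less_qval[OF a] by (auto simp: excess_def Hset_def)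
  have pair: "excess (c i) + excess (b i) \<ge> int n - int q - 2 * int m - excess a" if "i \<in> I" for i
    using triangle[OF that] excess_outside_Kset[of "b i"] that c b
      dist_at_le_mmin_plus_excess[OF a] dist_at_le_mmin_plus_excess[of "c i"] by force
  have disjoint: "a \<notin> c ` I \<union> b ` I" "c ` I \<inter> b ` I = {}"
    using a c b by auto
  have "excess a + l * (int n - int q - 2 * int m - excess a)
      \<le> excess a + (\<Sum>i\<in>I. excess (c i) + excess (b i))"
    using sum_mono[OF pair] by (simp add: l_def)
  also have "\<dots> = (\<Sum>x\<in>insert a (c ` I \<union> b ` I). excess x)"
    using disjoint I c b by (simp add: sum.union_disjoint sum.reindex sum.distrib)
  also have "\<dots> \<le> (\<Sum>x\<in>carrier G1. excess x)"
    using a c b finite_carrier Kset_subset_carrier excess_nonneg by (intro sum_mono2) auto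
  finally have "excess a + l * (int n - int q - 2 * int m - excess a) \<le> profit G1 G2"
    by (simp add: profit_eq_sum_excess)
  moreover have "(l - 1) * excess a \<le> (l - 1) * (int q - int m - 1)"
    using excess_a I by (intro mult_left_mono) (auto simp: l_def Suc_le_eq)
  ultimately show ?thesis
    by (simp add: l_def algebra_simps)
qed

end

theorem lemma9p7:
  fixes G1 G2 :: "'a monoid" and a :: 'a and b c :: "nat \<Rightarrow> 'a" and l :: nat
  assumes "group G1" and "group G2"
    and "carrier G1 = carrier G2" and "finite (carrier G1)"
    and "\<one>\<^bsub>G1\<^esub> = \<one>\<^bsub>G2\<^esub>"
    and "\<exists>x\<in>carrier G1. \<exists>y\<in>carrier G1. x \<otimes>\<^bsub>G1\<^esub> y \<noteq> x \<otimes>\<^bsub>G2\<^esub> y"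
    and "mmin G1 G2 \<ge> 3"
    and "l \<ge> 1"
    and "a \<in> Kset G1 G2"
    and "\<forall>i\<in>{1..l}. b i \<in> carrier G1 \<and> b i \<notin> Kset G1 G2"
    and "inj_on b {1..l}"
    and "(\<forall>i\<in>{1..l}. (a, b i) \<in> Tset G1 G2) \<or>
         (\<exists>c. \<forall>i\<in>{1..l}. c i \<in> Kset G1 G2 \<and> (c i, b i) \<in> Tset G1 G2 \<and> c i \<otimes>\<^bsub>G1\<^esub> b i = a)"
  shows "profit G1 G2 \<ge> int l * (int (card (carrier G1)) - 2 * int (qval G1) - int (mmin G1 G2) + 1)
                         + int (qval G1) - int (mmin G1 G2) - 1"
proof -
  interpret group_pair G1 G2
    using assms(1-5) by (simp add: group_pair_def group_pair_axioms_def)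
  let ?I = "{1..l}"
  have b: "inj_on b ?I" "b ` ?I \<subseteq> carrier G1 - K"
    using assms(10,11) by auto
  have I: "finite ?I" "1 \<in> ?I"
    using assms(8) by auto
  obtain c where "inj_on c ?I" "c ` ?I \<subseteq> K - {a}"
    and "\<And>i. i \<in> ?I \<Longrightarrow> n \<le> d a + d (c i) + d (b i)" and "m < q"
    using assms(12)
  proof (elim disjE exE)
    assume T: "\<forall>i\<in>?I. (a, b i) \<in> Tset G1 G2"
    show thesis
      using left_translates_in_Kset[OF _ b] mmin_less_qval_of_Tset T I(2) that by metis
  next
    fix c assume T: "\<forall>i\<in>?I. c i \<in> K \<and> (c i, b i) \<in> Tset G1 G2 \<and> c i \<otimes>\<^bsub>G1\<^esub> b i = a"
    show thesis
      using left_factors_in_Kset[OF _ b] mmin_less_qval_of_Tset T I(2) that by metis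
  qed
  from profit_lower_bound[OF assms(9) I(1) _ this(1,2) b this(3,4)] I(2)
  show ?thesis by auto
qed

end
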